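(* Let $N\ge1$. The group $\Phi_N$ is generated by $U=\{A^N,B^N\}\cup\{A^iB^jCB^{-j}A^{-i}:0\le i,j\le N-1\}$. Moreover, $\Phi_N$ has the presentation with generators $a,b,T_{i,j}$ ($0\le i,j\le N-1$), corresponding to $A^N$, $B^N$ and $A^iB^jCB^{-j}A^{-i}$ respectively, and the single relation $$aba^{-1}b^{-1}=\prod_{i=0}^{N-1}\prod_{j=0}^{N-1}T_{N-1-i,j},$$ the product being ordered with $i$ increasing in the outer product and $j$ increasing in the inner product.
   Context: Let $\bar\Gamma(2)=\Gamma(2)/\{\pm1\}\subset\mathrm{PSL}_2(\mathbb{Z})$, freely generated by the classes $A$ of $\begin{pmatrix}1&2\\0&1\end{pmatrix}$ and $B$ of $\begin{pmatrix}1&0\\2&1\end{pmatrix}$; $C=ABA^{-1}B^{-1}$. $\Phi_N$ is the kernel of the homomorphism $\bar\Gamma(2)\to(\mathbb{Z}/N\mathbb{Z})^2$ sending $A\mapsto(1,0)$ and $B\mapsto(0,1)$. *)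

theory Defs
  imports "HOL-Algebra.Algebra"
begin

text \<open>A word is a list of letters (g, e); e = False means g, e = True means g inverse.\<close>

fun red :: "('g \<times> bool) list \<Rightarrow> ('g \<times> bool) list" where
  "red [] = []"
| "red (x # xs) =
     (case red xs of
        [] \<Rightarrow> [x]
      | y # ys \<Rightarrow> (if fst y = fst x \<and> snd y \<noteq> snd x then ys else x # y # ys))"

definition free_group_on :: "'g set \<Rightarrow> ('g \<times> bool) list monoid" where
  "free_group_on S =
     \<lparr> carrier = {w. red w = w \<and> fst ` set w \<subseteq> S},
       monoid.mult = (\<lambda>x y. red (x @ y)),
       one = [] \<rparr>"

definition gen_word :: "'g \<Rightarrow> ('g \<times> bool) list" where
  "gen_word g = [(g, False)]"

definition lprod :: "('a, 'b) monoid_scheme \<Rightarrow> 'a list \<Rightarrow> 'a" where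
  "lprod G xs = foldr (\<lambda>x acc. x \<otimes>\<^bsub>G\<^esub> acc) xs \<one>\<^bsub>G\<^esub>"

definition free_ext :: "('a, 'b) monoid_scheme \<Rightarrow> ('g \<Rightarrow> 'a) \<Rightarrow> ('g \<times> bool) list \<Rightarrow> 'a" where
  "free_ext G f w = lprod G (map (\<lambda>(g, e). if e then inv\<^bsub>G\<^esub> (f g) else f g) w)"

definition normal_closure :: "('a, 'b) monoid_scheme \<Rightarrow> 'a set \<Rightarrow> 'a set" where
  "normal_closure G S =
     generate G {g \<otimes>\<^bsub>G\<^esub> s \<otimes>\<^bsub>G\<^esub> inv\<^bsub>G\<^esub> g | g s. g \<in> carrier G \<and> s \<in> S}"

section \<open>\<Gamma>(2) bar, realised as the free group on A, B\<close>

datatype ab = GA | GB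

definition Gamma2 :: "(ab \<times> bool) list monoid" where
  "Gamma2 = free_group_on UNIV"

abbreviation Amat :: "(ab \<times> bool) list" where "Amat \<equiv> gen_word GA"
abbreviation Bmat :: "(ab \<times> bool) list" where "Bmat \<equiv> gen_word GB"

definition Cmat :: "(ab \<times> bool) list" where
  "Cmat = Amat \<otimes>\<^bsub>Gamma2\<^esub> Bmat \<otimes>\<^bsub>Gamma2\<^esub> inv\<^bsub>Gamma2\<^esub> Amat \<otimes>\<^bsub>Gamma2\<^esub> inv\<^bsub>Gamma2\<^esub> Bmat"

definition expsum :: "'g \<Rightarrow> ('g \<times> bool) list \<Rightarrow> int" where
  "expsum g w = (\<Sum>x\<leftarrow>w. if fst x = g then (if snd x then -1 else 1) else 0)"

text \<open>The homomorphism \<Gamma>(2) bar \<rightarrow> (Z/NZ)^2, A \<mapsto> (1,0), B \<mapsto> (0,1), written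
  explicitly (residues represented in {0..N-1}); Phi N is its kernel.\<close>
definition to_ZN2 :: "nat \<Rightarrow> (ab \<times> bool) list \<Rightarrow> int \<times> int" where
  "to_ZN2 N w = (expsum GA w mod int N, expsum GB w mod int N)"

definition Phi :: "nat \<Rightarrow> (ab \<times> bool) list set" where
  "Phi N = {w \<in> carrier Gamma2. to_ZN2 N w = (0, 0)}"

definition Tconj :: "nat \<Rightarrow> nat \<Rightarrow> (ab \<times> bool) list" where
  "Tconj i j = Amat [^]\<^bsub>Gamma2\<^esub> i \<otimes>\<^bsub>Gamma2\<^esub> Bmat [^]\<^bsub>Gamma2\<^esub> j \<otimes>\<^bsub>Gamma2\<^esub> Cmat
     \<otimes>\<^bsub>Gamma2\<^esub> inv\<^bsub>Gamma2\<^esub> (Bmat [^]\<^bsub>Gamma2\<^esub> j) \<otimes>\<^bsub>Gamma2\<^esub> inv\<^bsub>Gamma2\<^esub> (Amat [^]\<^bsub>Gamma2\<^esub> i)"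

definition genU :: "nat \<Rightarrow> (ab \<times> bool) list set" where
  "genU N = {Amat [^]\<^bsub>Gamma2\<^esub> N, Bmat [^]\<^bsub>Gamma2\<^esub> N}
            \<union> {Tconj i j | i j. i < N \<and> j < N}"

datatype pgen = Pa | Pb | PT nat nat

definition pgens :: "nat \<Rightarrow> pgen set" where
  "pgens N = {Pa, Pb} \<union> {PT i j | i j. i < N \<and> j < N}"

definition PF :: "nat \<Rightarrow> (pgen \<times> bool) list monoid" where
  "PF N = free_group_on (pgens N)"

definition pgen_img :: "nat \<Rightarrow> pgen \<Rightarrow> (ab \<times> bool) list" where
  "pgen_img N g = (case g of Pa \<Rightarrow> Amat [^]\<^bsub>Gamma2\<^esub> N | Pb \<Rightarrow> Bmat [^]\<^bsub>Gamma2\<^esub> N | PT i j \<Rightarrow> Tconj i j)"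

definition pres_map :: "nat \<Rightarrow> (pgen \<times> bool) list \<Rightarrow> (ab \<times> bool) list" where
  "pres_map N = free_ext Gamma2 (pgen_img N)"

definition relator :: "nat \<Rightarrow> (pgen \<times> bool) list" where
  "relator N =
    (let F = PF N; a = gen_word Pa; b = gen_word Pb;
         P = lprod F (concat (map (\<lambda>i. map (\<lambda>j. gen_word (PT (N - 1 - i) j)) [0..<N]) [0..<N]))
     in a \<otimes>\<^bsub>F\<^esub> b \<otimes>\<^bsub>F\<^esub> inv\<^bsub>F\<^esub> a \<otimes>\<^bsub>F\<^esub> inv\<^bsub>F\<^esub> b \<otimes>\<^bsub>F\<^esub> inv\<^bsub>F\<^esub> P)"

end

theory Submission
  imports Defs "HOL-Library.Product_Plus"
begin

text \<open>
  \<Phi>_N is the kernel of the map from the free group on A, B onto (Z/N)^2, and the words A^i B^j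
  (0 \<le> i, j < N) form a Schreier transversal. Every Schreier generator is trivial, or by the
  identities [A, B^j] = (B^0 C B^-0) ... (B^(j-1) C B^-(j-1)) and
  [A^i, B^N] = (A^(i-1) [A, B^N] A^-(i-1)) ... (A^0 [A, B^N] A^-0), a product of A^N, B^N and the
  T_(i,j); so these elements generate \<Phi>_N.

  For the presentation let Q be the group presented by a, b, T_(i,j) and the relator. Writing the
  Schreier generators in Q through the same identities, the Reidemeister rewriting process becomes a
  homomorphism \<Phi>_N \<rightarrow> Q with A^N \<mapsto> a, B^N \<mapsto> b, T_(i,j) \<mapsto> T_(i,j); the relator is needed
  exactly at the corner position (N-1, N-1). Composed with the map to \<Phi>_N this is the projection
  onto Q, so the kernel of that map is the normal closure of the relator.
\<close>

lemma lprod_Nil [simp]: "lprod G [] = \<one>\<^bsub>G\<^esub>"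
  by (simp add: lprod_def)

lemma lprod_Cons [simp]: "lprod G (x # xs) = x \<otimes>\<^bsub>G\<^esub> lprod G xs"
  by (simp add: lprod_def)

definition row_prod :: "('a, 'b) monoid_scheme \<Rightarrow> (nat \<Rightarrow> nat \<Rightarrow> 'a) \<Rightarrow> nat \<Rightarrow> nat \<Rightarrow> 'a" where
  "row_prod G t i j = lprod G (map (t i) [0..<j])"

definition rows_prod :: "('a, 'b) monoid_scheme \<Rightarrow> nat \<Rightarrow> (nat \<Rightarrow> nat \<Rightarrow> 'a) \<Rightarrow> nat \<Rightarrow> 'a" where
  "rows_prod G n t i = lprod G (concat (map (\<lambda>m. map (t m) [0..<n]) (rev [0..<i])))"

lemma rows_prod_cong:
  "(\<And>m k. m < i \<Longrightarrow> k < n \<Longrightarrow> t m k = t' m k) \<Longrightarrow> rows_prod G n t i = rows_prod G n t' i"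
  unfolding rows_prod_def by (intro arg_cong[where f = "lprod G"] arg_cong[where f = concat] map_cong) auto

context group
begin

lemma inv_cancel_left [simp]: "x \<in> carrier G \<Longrightarrow> y \<in> carrier G \<Longrightarrow> inv x \<otimes> (x \<otimes> y) = y"
  by (simp add: m_assoc[symmetric])

lemma inv_cancel_left2 [simp]: "x \<in> carrier G \<Longrightarrow> y \<in> carrier G \<Longrightarrow> x \<otimes> (inv x \<otimes> y) = y"
  by (simp add: m_assoc[symmetric])

lemma lprod_closed [intro, simp]: "set xs \<subseteq> carrier G \<Longrightarrow> lprod G xs \<in> carrier G"
  by (induct xs) auto

lemma lprod_append:
  "set xs \<subseteq> carrier G \<Longrightarrow> set ys \<subseteq> carrier G \<Longrightarrow> lprod G (xs @ ys) = lprod G xs \<otimes> lprod G ys"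
  by (induct xs) (auto simp: m_assoc)

lemma lprod_conj:
  assumes "x \<in> carrier G" "set xs \<subseteq> carrier G"
  shows "x \<otimes> lprod G xs \<otimes> inv x = lprod G (map (\<lambda>y. x \<otimes> y \<otimes> inv x) xs)"
  using assms(2)
proof (induct xs)
  case Nil
  then show ?case using assms(1) by simp
next
  case (Cons y xs)
  have "x \<otimes> lprod G (y # xs) \<otimes> inv x = (x \<otimes> y \<otimes> inv x) \<otimes> (x \<otimes> lprod G xs \<otimes> inv x)"
    using Cons.prems assms(1) by (simp add: m_assoc)
  with Cons show ?case by simp
qed

lemma lprod_in_subgroup: "subgroup H G \<Longrightarrow> set xs \<subseteq> H \<Longrightarrow> lprod G xs \<in> H"
  by (induct xs) (auto intro: subgroup.one_closed subgroup.m_closed)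

lemma row_prod_0 [simp]: "row_prod G t i 0 = \<one>"
  by (simp add: row_prod_def)

lemma row_prod_closed [simp]: "(\<And>a b. t a b \<in> carrier G) \<Longrightarrow> row_prod G t i j \<in> carrier G"
  by (simp add: row_prod_def image_subset_iff)

lemma row_prod_Suc: "(\<And>a b. t a b \<in> carrier G) \<Longrightarrow> row_prod G t i (Suc j) = row_prod G t i j \<otimes> t i j"
  by (simp add: row_prod_def lprod_append image_subset_iff)

lemma rows_prod_0 [simp]: "rows_prod G n t 0 = \<one>"
  by (simp add: rows_prod_def)

lemma rows_prod_closed [simp]: "(\<And>a b. t a b \<in> carrier G) \<Longrightarrow> rows_prod G n t i \<in> carrier G"
  unfolding rows_prod_def by (rule lprod_closed) auto

lemma rows_prod_Suc:
  "(\<And>a b. t a b \<in> carrier G) \<Longrightarrow> rows_prod G n t (Suc i) = row_prod G t i n \<otimes> rows_prod G n t i"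
  unfolding rows_prod_def row_prod_def by (simp, rule lprod_append) auto

lemma commutator_pow_right:
  assumes a: "a \<in> carrier G" and b: "b \<in> carrier G"
  shows "a \<otimes> b [^] n \<otimes> inv a \<otimes> inv (b [^] n) =
         lprod G (map (\<lambda>k. b [^] k \<otimes> (a \<otimes> b \<otimes> inv a \<otimes> inv b) \<otimes> inv (b [^] k)) [0..<n])"
proof (induct n)
  case 0
  then show ?case using a by simp
next
  case (Suc n)
  have "lprod G (map (\<lambda>k. b [^] k \<otimes> (a \<otimes> b \<otimes> inv a \<otimes> inv b) \<otimes> inv (b [^] k)) [0..<Suc n])
      = (a \<otimes> b [^] n \<otimes> inv a \<otimes> inv (b [^] n)) \<otimes> (b [^] n \<otimes> (a \<otimes> b \<otimes> inv a \<otimes> inv b) \<otimes> inv (b [^] n))"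
    using a b Suc by (simp add: lprod_append image_subset_iff)
  also have "\<dots> = a \<otimes> b [^] Suc n \<otimes> inv a \<otimes> inv (b [^] Suc n)"
    using a b by (simp add: m_assoc inv_mult_group)
  finally show ?case by simp
qed

lemma conj_commutator_pow_right:
  assumes a: "a \<in> carrier G" and b: "b \<in> carrier G"
  shows "a [^] i \<otimes> (a \<otimes> b [^] j \<otimes> inv a \<otimes> inv (b [^] j)) \<otimes> inv (a [^] i) =
         row_prod G (\<lambda>m k. a [^] m \<otimes> b [^] k \<otimes> (a \<otimes> b \<otimes> inv a \<otimes> inv b) \<otimes> inv (b [^] k) \<otimes> inv (a [^] m)) i j"
proof -
  let ?c = "a \<otimes> b \<otimes> inv a \<otimes> inv b"
  have "\<And>k::nat. a [^] i \<otimes> b [^] k \<otimes> ?c \<otimes> inv (b [^] k) \<otimes> inv (a [^] i)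
      = a [^] i \<otimes> (b [^] k \<otimes> ?c \<otimes> inv (b [^] k)) \<otimes> inv (a [^] i)"
    using a b by (simp add: m_assoc)
  then show ?thesis
    using a b by (simp add: row_prod_def commutator_pow_right lprod_conj image_subset_iff o_def)
qed

lemma commutator_pow_pow:
  assumes a: "a \<in> carrier G" and b: "b \<in> carrier G"
  shows "a [^] i \<otimes> b [^] n \<otimes> inv (a [^] i) \<otimes> inv (b [^] n) =
         rows_prod G n (\<lambda>m k. a [^] m \<otimes> b [^] k \<otimes> (a \<otimes> b \<otimes> inv a \<otimes> inv b) \<otimes> inv (b [^] k) \<otimes> inv (a [^] m)) i"
proof (induct i)
  case 0
  then show ?case using b by simp
next
  case (Suc i)
  have "a [^] Suc i \<otimes> b [^] n \<otimes> inv (a [^] Suc i) \<otimes> inv (b [^] n)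
      = a [^] i \<otimes> (a \<otimes> b [^] n \<otimes> inv a \<otimes> inv (b [^] n)) \<otimes> inv (a [^] i)
        \<otimes> (a [^] i \<otimes> b [^] n \<otimes> inv (a [^] i) \<otimes> inv (b [^] n))"
    using a b by (simp add: m_assoc inv_mult_group nat_pow_mult[symmetric] nat_pow_Suc2)
  then show ?case
    using a b Suc by (simp add: conj_commutator_pow_right rows_prod_Suc)
qed

lemma normal_closure_normal:
  assumes "S \<subseteq> carrier G"
  shows "normal_closure G S \<lhd> G"
  unfolding normal_closure_def
proof (rule normal_generateI)
  show "{g \<otimes> s \<otimes> inv g |g s. g \<in> carrier G \<and> s \<in> S} \<subseteq> carrier G"
    using assms by auto
next
  fix h g
  assume "h \<in> {g \<otimes> s \<otimes> inv g |g s. g \<in> carrier G \<and> s \<in> S}" and g: "g \<in> carrier G"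
  then obtain g' s where g': "g' \<in> carrier G" and s: "s \<in> S" and h: "h = g' \<otimes> s \<otimes> inv g'"
    by auto
  have "s \<in> carrier G"
    using s assms by blast
  then have "g \<otimes> h \<otimes> inv g = (g \<otimes> g') \<otimes> s \<otimes> inv (g \<otimes> g')"
    using g g' unfolding h by (simp add: m_assoc inv_mult_group)
  then show "g \<otimes> h \<otimes> inv g \<in> {g \<otimes> s \<otimes> inv g |g s. g \<in> carrier G \<and> s \<in> S}"
    using g g' s by blast
qed

lemma mem_normal_closure:
  assumes "S \<subseteq> carrier G" "s \<in> S"
  shows "s \<in> normal_closure G S"
proof -
  from assms have "s = \<one> \<otimes> s \<otimes> inv \<one>"
    by auto
  with \<open>s \<in> S\<close> show ?thesis
    unfolding normal_closure_def by (blast intro: generate.incl)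
qed

end

lemma (in group_hom) lprod_hom:
  "set xs \<subseteq> carrier G \<Longrightarrow> h (lprod G xs) = lprod H (map h xs)"
  by (induct xs) auto

lemma (in group_hom) rows_prod_hom:
  assumes "\<And>m k. m < i \<Longrightarrow> k < n \<Longrightarrow> t m k \<in> carrier G"
  shows "h (rows_prod G n t i) = rows_prod H n (\<lambda>m k. h (t m k)) i"
  unfolding rows_prod_def using assms by (subst lprod_hom) (auto simp: map_concat o_def)

lemma (in group_hom) normal_closure_subset_kernel:
  assumes "S \<subseteq> kernel G H h"
  shows "normal_closure G S \<subseteq> kernel G H h"
  unfolding normal_closure_def
proof (rule G.generate_subgroup_incl[OF _ subgroup_kernel], clarify)
  fix g s
  assume "g \<in> carrier G" "s \<in> S"
  then show "g \<otimes>\<^bsub>G\<^esub> s \<otimes>\<^bsub>G\<^esub> inv\<^bsub>G\<^esub> g \<in> kernel G H h"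
    using assms by (intro normal.inv_op_closed2[OF normal_kernel]) auto
qed

lemma (in normal) kernel_subset_of_factorization:
  assumes h: "group_hom G K h" and factor: "\<And>x. x \<in> carrier G \<Longrightarrow> f (h x) = H #> x"
  shows "kernel G K h \<subseteq> H"
proof
  fix x
  assume x: "x \<in> kernel G K h"
  then have x: "x \<in> carrier G" and "h x = h \<one>"
    using h by (auto simp: kernel_def group_hom.hom_one)
  then have "H #> x = H #> \<one>"
    using factor[OF x] factor[OF one_closed] by simp
  also have "\<dots> = H"
    using subset by (rule coset_mult_one)
  finally show "x \<in> H"
    using x subgroup_axioms by (rule coset_join1)
qed

section \<open>Free groups\<close>

definition cons_red :: "('g \<times> bool) \<Rightarrow> ('g \<times> bool) list \<Rightarrow> ('g \<times> bool) list" where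
  "cons_red x r = (case r of [] \<Rightarrow> [x]
      | y # ys \<Rightarrow> (if fst y = fst x \<and> snd y \<noteq> snd x then ys else x # y # ys))"

lemma red_Cons: "red (x # xs) = cons_red x (red xs)"
  by (simp add: cons_red_def)

declare red.simps(2)[simp del]

fun is_reduced :: "('g \<times> bool) list \<Rightarrow> bool" where
  "is_reduced [] = True"
| "is_reduced [x] = True"
| "is_reduced (x # y # ys) = (\<not> (fst y = fst x \<and> snd y \<noteq> snd x) \<and> is_reduced (y # ys))"

lemma is_reduced_tl: "is_reduced (x # xs) \<Longrightarrow> is_reduced xs"
  by (cases xs) auto

lemma is_reduced_cons_red: "is_reduced r \<Longrightarrow> is_reduced (cons_red x r)"
  by (cases r) (auto simp: cons_red_def dest: is_reduced_tl)

lemma is_reduced_red: "is_reduced (red w)"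
  by (induct w) (auto simp: red_Cons is_reduced_cons_red)

lemma red_is_reduced: "is_reduced w \<Longrightarrow> red w = w"
  by (induct w rule: is_reduced.induct) (auto simp: red_Cons cons_red_def)

lemma red_red [simp]: "red (red w) = red w"
  using is_reduced_red red_is_reduced by blast

lemma red_tl: "red (x # w) = x # w \<Longrightarrow> red w = w"
  by (metis is_reduced_red is_reduced_tl red_is_reduced)

lemma cons_red_cancel:
  assumes "is_reduced s" "fst y = fst x" "snd y \<noteq> snd x"
  shows "cons_red x (cons_red y s) = s"
proof (cases s)
  case Nil
  then show ?thesis using assms by (simp add: cons_red_def)
next
  case (Cons z zs)
  show ?thesis
  proof (cases "fst z = fst y \<and> snd z \<noteq> snd y")
    case True
    then have "z = x" using assms by (cases z; cases x) auto
    with Cons True assms(1) show ?thesis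
      by (cases zs) (auto simp: cons_red_def)
  next
    case False
    then show ?thesis using Cons assms by (auto simp: cons_red_def)
  qed
qed

lemma red_append_right: "red (u @ red v) = red (u @ v)"
  by (induct u) (auto simp: red_Cons)

lemma red_cons_red_append:
  assumes "is_reduced r"
  shows "red (cons_red x r @ v) = cons_red x (red (r @ v))"
proof (cases r)
  case Nil
  then show ?thesis by (simp add: cons_red_def red_Cons)
next
  case (Cons y ys)
  show ?thesis
  proof (cases "fst y = fst x \<and> snd y \<noteq> snd x")
    case True
    then have "cons_red x (red (r @ v)) = cons_red x (cons_red y (red (ys @ v)))"
      using Cons by (simp add: red_Cons)
    also have "\<dots> = red (ys @ v)"
      using True cons_red_cancel is_reduced_red by metis
    finally show ?thesis using Cons True by (simp add: cons_red_def)
  next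
    case False
    then have "cons_red x r = x # r" using Cons by (simp add: cons_red_def)
    then show ?thesis using Cons by (simp add: red_Cons)
  qed
qed

lemma red_append_left: "red (red u @ v) = red (u @ v)"
proof (induct u)
  case Nil
  then show ?case by simp
next
  case (Cons x u)
  have "red (red (x # u) @ v) = cons_red x (red (red u @ v))"
    by (simp add: red_Cons red_cons_red_append[OF is_reduced_red])
  also have "\<dots> = red ((x # u) @ v)"
    using Cons by (simp add: red_Cons)
  finally show ?case .
qed

lemma set_red: "set (red w) \<subseteq> set w"
  by (induct w) (auto simp: red_Cons cons_red_def split: list.splits if_splits)

definition inv_letter :: "('g \<times> bool) \<Rightarrow> ('g \<times> bool)" where
  "inv_letter x = (fst x, \<not> snd x)"

definition inv_word :: "('g \<times> bool) list \<Rightarrow> ('g \<times> bool) list" where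
  "inv_word w = rev (map inv_letter w)"

lemma red_inv_word_append: "red (inv_word w @ w) = []"
proof (induct w)
  case Nil
  then show ?case by (simp add: inv_word_def)
next
  case (Cons x w)
  have "red (inv_letter x # x # w) = red w"
    by (simp add: red_Cons cons_red_cancel is_reduced_red inv_letter_def)
  then have "red (inv_word (x # w) @ x # w) = red (inv_word w @ w)"
    by (metis append.assoc append_Cons append_Nil inv_word_def list.simps(9) red_append_right rev.simps(2))
  with Cons show ?case by simp
qed

lemma fst_set_inv_word: "fst ` set (inv_word w) = fst ` set w"
  by (force simp: inv_word_def inv_letter_def image_iff)

lemma inv_word_replicate: "inv_word (replicate n (g, e)) = replicate n (g, \<not> e)"
  by (simp add: inv_word_def inv_letter_def)

lemma free_group_on_carrier: "w \<in> carrier (free_group_on S) \<longleftrightarrow> red w = w \<and> fst ` set w \<subseteq> S"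
  by (simp add: free_group_on_def)

lemma free_group_on_mult: "x \<otimes>\<^bsub>free_group_on S\<^esub> y = red (x @ y)"
  by (simp add: free_group_on_def)

lemma free_group_on_one: "\<one>\<^bsub>free_group_on S\<^esub> = []"
  by (simp add: free_group_on_def)

lemma red_in_free_group_on: "fst ` set w \<subseteq> S \<Longrightarrow> red w \<in> carrier (free_group_on S)"
  using set_red[of w] by (auto simp: free_group_on_carrier)

lemma free_group_on_red_mult: "red u \<otimes>\<^bsub>free_group_on S\<^esub> red v = red (u @ v)"
  by (simp add: free_group_on_mult red_append_left red_append_right)

lemma group_free_group_on: "group (free_group_on S)"
proof (rule groupI)
  fix x y
  assume "x \<in> carrier (free_group_on S)" "y \<in> carrier (free_group_on S)"
  then show "x \<otimes>\<^bsub>free_group_on S\<^esub> y \<in> carrier (free_group_on S)"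
    using red_in_free_group_on[of "x @ y" S] by (auto simp: free_group_on_mult free_group_on_carrier)
next
  show "\<one>\<^bsub>free_group_on S\<^esub> \<in> carrier (free_group_on S)"
    by (simp add: free_group_on_one free_group_on_carrier)
next
  fix x y z
  show "x \<otimes>\<^bsub>free_group_on S\<^esub> y \<otimes>\<^bsub>free_group_on S\<^esub> z =
        x \<otimes>\<^bsub>free_group_on S\<^esub> (y \<otimes>\<^bsub>free_group_on S\<^esub> z)"
    by (simp add: free_group_on_mult red_append_left red_append_right)
next
  fix x
  assume "x \<in> carrier (free_group_on S)"
  then show "\<one>\<^bsub>free_group_on S\<^esub> \<otimes>\<^bsub>free_group_on S\<^esub> x = x"
    by (simp add: free_group_on_mult free_group_on_one free_group_on_carrier)
next
  fix x
  assume x: "x \<in> carrier (free_group_on S)"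
  then have "red (inv_word x) \<in> carrier (free_group_on S)"
    by (intro red_in_free_group_on) (simp add: fst_set_inv_word free_group_on_carrier)
  moreover have "red (inv_word x) \<otimes>\<^bsub>free_group_on S\<^esub> x = \<one>\<^bsub>free_group_on S\<^esub>"
    using x by (simp add: free_group_on_mult free_group_on_one red_append_left red_inv_word_append)
  ultimately show "\<exists>y\<in>carrier (free_group_on S). y \<otimes>\<^bsub>free_group_on S\<^esub> x = \<one>\<^bsub>free_group_on S\<^esub>"
    by blast
qed

lemma inv_free_group_on_red:
  assumes "fst ` set w \<subseteq> S"
  shows "inv\<^bsub>free_group_on S\<^esub> (red w) = red (inv_word w)"
proof (rule group.inv_equality[OF group_free_group_on])
  show "red (inv_word w) \<otimes>\<^bsub>free_group_on S\<^esub> red w = \<one>\<^bsub>free_group_on S\<^esub>"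
    by (simp add: free_group_on_red_mult red_inv_word_append free_group_on_one)
  show "red w \<in> carrier (free_group_on S)"
    using assms by (rule red_in_free_group_on)
  show "red (inv_word w) \<in> carrier (free_group_on S)"
    using assms by (intro red_in_free_group_on) (simp add: fst_set_inv_word)
qed

lemma gen_word_eq_red: "gen_word g = red [(g, False)]"
  by (simp add: gen_word_def red_Cons cons_red_def)

lemma gen_word_in_free_group_on: "g \<in> S \<Longrightarrow> gen_word g \<in> carrier (free_group_on S)"
  by (simp add: gen_word_eq_red red_in_free_group_on)

lemma inv_gen_word: "g \<in> S \<Longrightarrow> inv\<^bsub>free_group_on S\<^esub> (gen_word g) = red [(g, True)]"
  by (simp add: gen_word_eq_red inv_free_group_on_red inv_word_def inv_letter_def)

lemma free_group_on_hom_eqI: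
  assumes G: "group G"
    and f: "f \<in> hom (free_group_on S) G" and f': "f' \<in> hom (free_group_on S) G"
    and gens: "\<And>g. g \<in> S \<Longrightarrow> f (gen_word g) = f' (gen_word g)"
    and w: "w \<in> carrier (free_group_on S)"
  shows "f w = f' w"
proof -
  interpret F: group "free_group_on S" by (rule group_free_group_on)
  interpret f: group_hom "free_group_on S" G f
    using G f by (simp add: group_hom_def group_hom_axioms_def F.group_axioms)
  interpret f': group_hom "free_group_on S" G f'
    using G f' by (simp add: group_hom_def group_hom_axioms_def F.group_axioms)
  from w show ?thesis
  proof (induct w)
    case Nil
    then show ?case
      using f.hom_one f'.hom_one by (simp add: free_group_on_one)
  next
    case (Cons l w)
    obtain g e where l: "l = (g, e)" by (cases l)
    have g: "g \<in> S" and w: "w \<in> carrier (free_group_on S)"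
      using Cons(2) l red_tl[of l w] by (auto simp: free_group_on_carrier)
    have letter: "red [l] = (if e then inv\<^bsub>free_group_on S\<^esub> (gen_word g) else gen_word g)"
      using g l by (cases e) (simp_all add: inv_gen_word gen_word_eq_red[symmetric])
    have "l # w = red [l] \<otimes>\<^bsub>free_group_on S\<^esub> w"
      using Cons(2) by (simp add: free_group_on_carrier free_group_on_mult red_append_left)
    moreover have "red [l] \<in> carrier (free_group_on S)"
      using g l by (simp add: red_in_free_group_on)
    moreover have "f (red [l]) = f' (red [l])"
      using letter g gens gen_word_in_free_group_on[OF g] by (simp add: f.hom_inv f'.hom_inv)
    ultimately show ?case
      using Cons(1)[OF w] w by simp
  qed
qed

definition letter_val :: "('a, 'b) monoid_scheme \<Rightarrow> ('g \<Rightarrow> 'a) \<Rightarrow> ('g \<times> bool) \<Rightarrow> 'a" where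
  "letter_val G f x = (if snd x then inv\<^bsub>G\<^esub> (f (fst x)) else f (fst x))"

lemma free_ext_Nil [simp]: "free_ext G f [] = \<one>\<^bsub>G\<^esub>"
  by (simp add: free_ext_def)

lemma free_ext_Cons [simp]: "free_ext G f (x # w) = letter_val G f x \<otimes>\<^bsub>G\<^esub> free_ext G f w"
  by (cases x) (simp add: free_ext_def letter_val_def)

context group
begin

lemma letter_val_closed [simp]: "f (fst x) \<in> carrier G \<Longrightarrow> letter_val G f x \<in> carrier G"
  by (simp add: letter_val_def)

lemma free_ext_closed [simp]: "f ` fst ` set w \<subseteq> carrier G \<Longrightarrow> free_ext G f w \<in> carrier G"
  by (induct w) auto

lemma free_ext_append:
  "f ` fst ` set u \<subseteq> carrier G \<Longrightarrow> f ` fst ` set v \<subseteq> carrier G \<Longrightarrow>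
   free_ext G f (u @ v) = free_ext G f u \<otimes> free_ext G f v"
  by (induct u) (auto simp: m_assoc)

lemma free_ext_cons_red:
  assumes "f (fst x) \<in> carrier G" "f ` fst ` set r \<subseteq> carrier G"
  shows "free_ext G f (cons_red x r) = free_ext G f (x # r)"
proof (cases r)
  case Nil
  then show ?thesis by (simp add: cons_red_def)
next
  case (Cons y ys)
  show ?thesis
  proof (cases "fst y = fst x \<and> snd y \<noteq> snd x")
    case True
    have "letter_val G f x \<otimes> letter_val G f y = \<one>"
      using True assms(1) by (cases "snd x") (auto simp: letter_val_def)
    then have "letter_val G f x \<otimes> (letter_val G f y \<otimes> free_ext G f ys) = free_ext G f ys"
      using True assms Cons by (simp add: m_assoc[symmetric])
    then show ?thesis using True Cons by (simp add: cons_red_def)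
  next
    case False
    then have "cons_red x r = x # r" using Cons by (simp add: cons_red_def)
    then show ?thesis by simp
  qed
qed

lemma free_ext_red: "f ` fst ` set w \<subseteq> carrier G \<Longrightarrow> free_ext G f (red w) = free_ext G f w"
proof (induct w)
  case Nil
  then show ?case by simp
next
  case (Cons x w)
  have "f ` fst ` set (red w) \<subseteq> carrier G"
    using Cons(2) set_red[of w] by auto
  then show ?case
    using Cons by (simp add: red_Cons free_ext_cons_red)
qed

lemma free_ext_hom:
  assumes "f ` S \<subseteq> carrier G"
  shows "free_ext G f \<in> hom (free_group_on S) G"
proof (rule homI)
  fix x
  assume "x \<in> carrier (free_group_on S)"
  then show "free_ext G f x \<in> carrier G"
    using assms by (auto simp: free_group_on_carrier intro!: free_ext_closed)
next
  fix x y
  assume "x \<in> carrier (free_group_on S)" "y \<in> carrier (free_group_on S)"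
  then have "f ` fst ` set x \<subseteq> carrier G" "f ` fst ` set y \<subseteq> carrier G"
    using assms unfolding free_group_on_carrier by blast+
  then show "free_ext G f (x \<otimes>\<^bsub>free_group_on S\<^esub> y) = free_ext G f x \<otimes> free_ext G f y"
    by (simp add: free_group_on_mult free_ext_red free_ext_append image_Un)
qed

lemma free_ext_gen_word [simp]: "free_ext G f (gen_word g) = f g \<otimes> \<one>"
  by (simp add: gen_word_def letter_val_def)

lemma free_ext_image_subset: "free_ext G f ` carrier (free_group_on S) \<subseteq> generate G (f ` S)"
proof clarify
  fix w
  assume "w \<in> carrier (free_group_on S)"
  then have "fst ` set w \<subseteq> S" by (simp add: free_group_on_carrier)
  then show "free_ext G f w \<in> generate G (f ` S)"
  proof (induct w)
    case Nil
    then show ?case by (simp add: generate.one)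
  next
    case (Cons x w)
    then have "letter_val G f x \<in> generate G (f ` S)"
      by (auto simp: letter_val_def intro: generate.incl generate.inv)
    with Cons show ?case by (auto intro: generate.eng)
  qed
qed

lemma generate_subset_free_ext_image:
  assumes "f ` S \<subseteq> carrier G"
  shows "generate G (f ` S) \<subseteq> free_ext G f ` carrier (free_group_on S)"
proof -
  interpret F: group "free_group_on S" by (rule group_free_group_on)
  interpret f: group_hom "free_group_on S" G "free_ext G f"
    using assms by (simp add: group_hom_def group_hom_axioms_def F.group_axioms
        group_axioms free_ext_hom)
  show ?thesis
  proof
    fix y
    assume "y \<in> generate G (f ` S)"
    then show "y \<in> free_ext G f ` carrier (free_group_on S)"
    proof induct
      case one
      then show ?case using f.hom_one by force
    next
      case (incl h)
      then obtain g where "g \<in> S" "h = f g" by auto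
      then show ?case
        using assms gen_word_in_free_group_on[of g S] by (intro image_eqI[of _ _ "gen_word g"]) auto
    next
      case (inv h)
      then obtain g where g: "g \<in> S" "h = f g" by auto
      then have "inv h = free_ext G f (inv\<^bsub>free_group_on S\<^esub> gen_word g)"
        using assms by (simp add: f.hom_inv gen_word_in_free_group_on image_subset_iff)
      then show ?case
        using g by (blast intro: F.inv_closed gen_word_in_free_group_on)
    next
      case (eng h1 h2)
      then obtain w1 w2 where "w1 \<in> carrier (free_group_on S)" "w2 \<in> carrier (free_group_on S)"
        "h1 = free_ext G f w1" "h2 = free_ext G f w2" by auto
      then show ?case
        by (intro image_eqI[of _ _ "w1 \<otimes>\<^bsub>free_group_on S\<^esub> w2"]) auto
    qed
  qed
qed

lemma free_ext_image:
  "f ` S \<subseteq> carrier G \<Longrightarrow> free_ext G f ` carrier (free_group_on S) = generate G (f ` S)"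
  using free_ext_image_subset generate_subset_free_ext_image by (rule subset_antisym)

end

definition word_disp :: "('g \<Rightarrow> 'p::ab_group_add) \<Rightarrow> ('g \<times> bool) list \<Rightarrow> 'p" where
  "word_disp d w = (\<Sum>(g, e)\<leftarrow>w. if e then - d g else d g)"

lemma word_disp_Nil [simp]: "word_disp d [] = 0"
  by (simp add: word_disp_def)

lemma word_disp_Cons [simp]: "word_disp d ((g, e) # w) = (if e then - d g else d g) + word_disp d w"
  by (simp add: word_disp_def)

lemma word_disp_append [simp]: "word_disp d (u @ v) = word_disp d u + word_disp d v"
  by (simp add: word_disp_def)

lemma word_disp_red [simp]: "word_disp d (red w) = word_disp d w"
proof (induct w)
  case Nil
  then show ?case by simp
next
  case (Cons x w)
  have "word_disp d (cons_red x r) = word_disp d (x # r)" for r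
    by (cases r; cases x) (auto simp: cons_red_def)
  with Cons show ?case by (cases x) (simp add: red_Cons)
qed

lemma word_disp_inv_word [simp]: "word_disp d (inv_word w) = - word_disp d w"
  by (induct w) (auto simp: inv_word_def inv_letter_def)

section \<open>The Reidemeister rewriting process\<close>

text \<open>
  A word is read letter by letter; p is the current position, i.e. the coset reached so far,
  labelled by the displacement d, and s p g stands for the Schreier generator t_p g t_(p + d g)^-1
  contributed by the letter g, where t is the transversal.
\<close>

fun reidemeister_rewrite ::
  "('a, 'b) monoid_scheme \<Rightarrow> ('p \<Rightarrow> 'g \<Rightarrow> 'a) \<Rightarrow> ('g \<Rightarrow> 'p::ab_group_add) \<Rightarrow> 'p \<Rightarrow> ('g \<times> bool) list \<Rightarrow> 'a"
where
  "reidemeister_rewrite G s d p [] = \<one>\<^bsub>G\<^esub>"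
| "reidemeister_rewrite G s d p ((g, False) # w) = s p g \<otimes>\<^bsub>G\<^esub> reidemeister_rewrite G s d (p + d g) w"
| "reidemeister_rewrite G s d p ((g, True) # w) =
     inv\<^bsub>G\<^esub> (s (p - d g) g) \<otimes>\<^bsub>G\<^esub> reidemeister_rewrite G s d (p - d g) w"

lemma reidemeister_rewrite_Cons:
  "reidemeister_rewrite G s d p ((g, e) # w) =
   (if e then inv\<^bsub>G\<^esub> (s (p - d g) g) \<otimes>\<^bsub>G\<^esub> reidemeister_rewrite G s d (p - d g) w
    else s p g \<otimes>\<^bsub>G\<^esub> reidemeister_rewrite G s d (p + d g) w)"
  by (cases e) simp_all

context group
begin

context
  fixes s :: "'p::ab_group_add \<Rightarrow> 'g \<Rightarrow> 'a" and d :: "'g \<Rightarrow> 'p"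
  assumes s_closed: "\<And>p g. s p g \<in> carrier G"
begin

lemma reidemeister_rewrite_closed [simp]: "reidemeister_rewrite G s d p w \<in> carrier G"
  by (induct w arbitrary: p) (auto simp: s_closed reidemeister_rewrite_Cons)

lemma reidemeister_rewrite_append:
  "reidemeister_rewrite G s d p (u @ v) =
   reidemeister_rewrite G s d p u \<otimes> reidemeister_rewrite G s d (p + word_disp d u) v"
  by (induct u arbitrary: p) (auto simp: s_closed m_assoc algebra_simps reidemeister_rewrite_Cons)

lemma reidemeister_rewrite_cons_red:
  "reidemeister_rewrite G s d p (cons_red x r) = reidemeister_rewrite G s d p (x # r)"
proof (cases r)
  case Nil
  then show ?thesis by (simp add: cons_red_def)
next
  case (Cons y ys)
  show ?thesis
  proof (cases "fst y = fst x \<and> snd y \<noteq> snd x")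
    case True
    then have "cons_red x r = ys" using Cons by (simp add: cons_red_def)
    moreover obtain g e where "x = (g, e)" by (cases x)
    ultimately show ?thesis
      using True Cons by (cases e; cases y) (simp_all add: s_closed m_assoc[symmetric])
  next
    case False
    then have "cons_red x r = x # r" using Cons by (simp add: cons_red_def)
    then show ?thesis by simp
  qed
qed

lemma reidemeister_rewrite_red: "reidemeister_rewrite G s d p (red w) = reidemeister_rewrite G s d p w"
proof (induct w arbitrary: p)
  case Nil
  then show ?case by simp
next
  case (Cons x w)
  then show ?case
    by (cases x; cases "snd x") (auto simp: red_Cons reidemeister_rewrite_cons_red)
qed

lemma reidemeister_rewrite_translate:
  assumes "\<And>p g. s (p + t) g = s p g"
  shows "reidemeister_rewrite G s d (p + t) w = reidemeister_rewrite G s d p w"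
proof (induct w arbitrary: p)
  case (Cons x w)
  obtain g e where x: "x = (g, e)" by (cases x)
  have shift: "p + t - d g = (p - d g) + t" "p + t + d g = (p + d g) + t"
    by (simp_all add: algebra_simps)
  show ?case
    by (simp add: x assms reidemeister_rewrite_Cons shift Cons)
qed simp

lemma reidemeister_rewrite_replicate:
  assumes "\<And>k. k < n \<Longrightarrow> s (p + word_disp d (replicate k (g, False))) g = \<one>"
  shows "reidemeister_rewrite G s d p (replicate n (g, False)) = \<one>"
  using assms
proof (induct n arbitrary: p)
  case (Suc n)
  have "reidemeister_rewrite G s d (p + d g) (replicate n (g, False)) = \<one>"
    using Suc(2)[of "Suc _"] by (intro Suc(1)) (simp add: algebra_simps)
  then show ?case using Suc(2)[of 0] by simp
qed simp

lemma reidemeister_rewrite_replicate_inv: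
  assumes "\<And>k. k < n \<Longrightarrow> s (p + word_disp d (replicate (Suc k) (g, True))) g = \<one>"
  shows "reidemeister_rewrite G s d p (replicate n (g, True)) = \<one>"
  using assms
proof (induct n arbitrary: p)
  case (Suc n)
  have "reidemeister_rewrite G s d (p - d g) (replicate n (g, True)) = \<one>"
    using Suc(2)[of "Suc _"] by (intro Suc(1)) (simp add: algebra_simps)
  then show ?case using Suc(2)[of 0] by simp
qed simp

lemma reidemeister_rewrite_hom:
  assumes periodic: "\<And>u p g. u \<in> H \<Longrightarrow> s (p + word_disp d u) g = s p g"
  shows "reidemeister_rewrite G s d p \<in> hom ((free_group_on S)\<lparr>carrier := H\<rparr>) G"
proof (rule homI)
  fix u v
  assume "u \<in> carrier ((free_group_on S)\<lparr>carrier := H\<rparr>)"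
  then have "u \<in> H" by simp
  then show "reidemeister_rewrite G s d p (u \<otimes>\<^bsub>(free_group_on S)\<lparr>carrier := H\<rparr>\<^esub> v) =
             reidemeister_rewrite G s d p u \<otimes> reidemeister_rewrite G s d p v"
    using periodic reidemeister_rewrite_translate
    by (simp add: free_group_on_mult reidemeister_rewrite_red reidemeister_rewrite_append)
qed simp

end

end

section \<open>Generators of \<Phi>_N\<close>

lemma group_Gamma2: "group Gamma2"
  unfolding Gamma2_def by (rule group_free_group_on)

interpretation G2: group Gamma2
  by (rule group_Gamma2)

lemma Gamma2_carrier: "w \<in> carrier Gamma2 \<longleftrightarrow> red w = w"
  by (simp add: Gamma2_def free_group_on_carrier)

lemma red_in_Gamma2 [simp]: "red w \<in> carrier Gamma2"
  by (simp add: Gamma2_carrier)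

lemma Gamma2_red_mult: "red u \<otimes>\<^bsub>Gamma2\<^esub> red v = red (u @ v)"
  by (simp add: Gamma2_def free_group_on_red_mult)

lemma Gamma2_one: "\<one>\<^bsub>Gamma2\<^esub> = []"
  by (simp add: Gamma2_def free_group_on_one)

lemma inv_Gamma2_red: "inv\<^bsub>Gamma2\<^esub> (red w) = red (inv_word w)"
  unfolding Gamma2_def by (rule inv_free_group_on_red) simp

lemma gen_word_in_Gamma2 [simp]: "gen_word (g::ab) \<in> carrier Gamma2"
  by (simp add: gen_word_eq_red)

lemma pow_gen_word_Gamma2: "gen_word g [^]\<^bsub>Gamma2\<^esub> (n::nat) = red (replicate n (g, False))"
proof (induct n)
  case 0
  then show ?case by (simp add: Gamma2_one)
next
  case (Suc n)
  then show ?case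
    by (simp add: gen_word_eq_red Gamma2_red_mult replicate_append_same[symmetric]
        del: replicate_append_same)
qed

definition commutator_word :: "(ab \<times> bool) list" where
  "commutator_word = [(GA, False), (GB, False), (GA, True), (GB, True)]"

definition Tconj_word :: "nat \<Rightarrow> nat \<Rightarrow> (ab \<times> bool) list" where
  "Tconj_word i j = replicate i (GA, False) @ replicate j (GB, False) @ commutator_word
     @ replicate j (GB, True) @ replicate i (GA, True)"

lemma Cmat_eq_red: "Cmat = red commutator_word"
  by (simp add: Cmat_def gen_word_eq_red Gamma2_red_mult commutator_word_def inv_Gamma2_red
      inv_word_def inv_letter_def)

lemma Tconj_eq_red: "Tconj i j = red (Tconj_word i j)"
  by (simp add: Tconj_def Tconj_word_def pow_gen_word_Gamma2 inv_Gamma2_red inv_word_replicate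
      Cmat_eq_red Gamma2_red_mult)

lemma Tconj_in_Gamma2 [simp]: "Tconj i j \<in> carrier Gamma2"
  by (simp add: Tconj_eq_red)

lemma Tconj_eq:
  "Tconj = (\<lambda>i j. Amat [^]\<^bsub>Gamma2\<^esub> i \<otimes>\<^bsub>Gamma2\<^esub> Bmat [^]\<^bsub>Gamma2\<^esub> j \<otimes>\<^bsub>Gamma2\<^esub>
     (Amat \<otimes>\<^bsub>Gamma2\<^esub> Bmat \<otimes>\<^bsub>Gamma2\<^esub> inv\<^bsub>Gamma2\<^esub> Amat \<otimes>\<^bsub>Gamma2\<^esub> inv\<^bsub>Gamma2\<^esub> Bmat)
     \<otimes>\<^bsub>Gamma2\<^esub> inv\<^bsub>Gamma2\<^esub> (Bmat [^]\<^bsub>Gamma2\<^esub> j) \<otimes>\<^bsub>Gamma2\<^esub> inv\<^bsub>Gamma2\<^esub> (Amat [^]\<^bsub>Gamma2\<^esub> i))"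
  by (intro ext) (simp add: Tconj_def Cmat_def)

fun ab_unit :: "ab \<Rightarrow> int \<times> int" where
  "ab_unit GA = (1, 0)"
| "ab_unit GB = (0, 1)"

lemma word_disp_ab_unit: "word_disp ab_unit w = (expsum GA w, expsum GB w)"
proof (induct w)
  case Nil
  then show ?case by (simp add: expsum_def zero_prod_def)
next
  case (Cons x w)
  then show ?case by (cases x; cases "fst x") (auto simp: expsum_def)
qed

lemma mem_Phi_iff:
  "w \<in> Phi N \<longleftrightarrow> red w = w \<and> int N dvd fst (word_disp ab_unit w) \<and> int N dvd snd (word_disp ab_unit w)"
  by (auto simp: Phi_def to_ZN2_def Gamma2_carrier word_disp_ab_unit dvd_eq_mod_eq_0)

lemma subgroup_Phi: "subgroup (Phi N) Gamma2"
proof (rule G2.subgroupI)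
  show "Phi N \<subseteq> carrier Gamma2"
    by (auto simp: mem_Phi_iff Gamma2_carrier)
  show "Phi N \<noteq> {}"
    using mem_Phi_iff[of "[]" N] by auto
next
  fix a
  assume "a \<in> Phi N"
  then show "inv\<^bsub>Gamma2\<^esub> a \<in> Phi N"
    using inv_Gamma2_red[of a]
    by (auto simp: mem_Phi_iff)
next
  fix a b
  assume "a \<in> Phi N" "b \<in> Phi N"
  then show "a \<otimes>\<^bsub>Gamma2\<^esub> b \<in> Phi N"
    using Gamma2_red_mult[of a b] by (auto simp: mem_Phi_iff)
qed

lemma genU_subset_Phi: "genU N \<subseteq> Phi N"
  by (auto simp: genU_def mem_Phi_iff word_disp_ab_unit expsum_def sum_list_replicate
      pow_gen_word_Gamma2 Tconj_eq_red Tconj_word_def commutator_word_def)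

lemma nat_mod_add_one:
  assumes "N \<ge> 1"
  shows "nat ((p + 1) mod int N) = (if nat (p mod int N) = N - 1 then 0 else Suc (nat (p mod int N)))"
proof -
  define r where "r = p mod int N"
  have r: "0 \<le> r" "r < int N" using assms by (auto simp: r_def)
  have "(p + 1) mod int N = (r + 1) mod int N"
    by (simp add: r_def mod_add_left_eq)
  then show ?thesis
    using r by (cases "r + 1 = int N") (auto simp flip: r_def simp: nat_add_distrib)
qed

text \<open>A Schreier transversal of \<Phi>_N: the coset with exponent sums pq is represented by A^i B^j
  with (i, j) = pq mod N.\<close>

definition coset_rep :: "nat \<Rightarrow> int \<times> int \<Rightarrow> (ab \<times> bool) list" where
  "coset_rep N pq = Amat [^]\<^bsub>Gamma2\<^esub> nat (fst pq mod int N) \<otimes>\<^bsub>Gamma2\<^esub> Bmat [^]\<^bsub>Gamma2\<^esub> nat (snd pq mod int N)"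

lemma coset_rep_in_Gamma2 [simp]: "coset_rep N pq \<in> carrier Gamma2"
  by (simp add: coset_rep_def)

lemma subgroup_generate_genU: "subgroup (generate Gamma2 (genU N)) Gamma2"
  by (rule G2.generate_is_subgroup) (auto simp: genU_def)

lemma Tconj_in_generate_genU: "i < N \<Longrightarrow> j < N \<Longrightarrow> Tconj i j \<in> generate Gamma2 (genU N)"
  by (rule generate.incl) (auto simp: genU_def)

lemma conj_commutator_in_generate_genU:
  assumes "i < N" "j \<le> N"
  shows "Amat [^]\<^bsub>Gamma2\<^esub> i \<otimes>\<^bsub>Gamma2\<^esub>
           (Amat \<otimes>\<^bsub>Gamma2\<^esub> Bmat [^]\<^bsub>Gamma2\<^esub> j \<otimes>\<^bsub>Gamma2\<^esub> inv\<^bsub>Gamma2\<^esub> Amat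
            \<otimes>\<^bsub>Gamma2\<^esub> inv\<^bsub>Gamma2\<^esub> (Bmat [^]\<^bsub>Gamma2\<^esub> j))
         \<otimes>\<^bsub>Gamma2\<^esub> inv\<^bsub>Gamma2\<^esub> (Amat [^]\<^bsub>Gamma2\<^esub> i) \<in> generate Gamma2 (genU N)"
proof -
  have "Amat [^]\<^bsub>Gamma2\<^esub> i \<otimes>\<^bsub>Gamma2\<^esub>
           (Amat \<otimes>\<^bsub>Gamma2\<^esub> Bmat [^]\<^bsub>Gamma2\<^esub> j \<otimes>\<^bsub>Gamma2\<^esub> inv\<^bsub>Gamma2\<^esub> Amat
            \<otimes>\<^bsub>Gamma2\<^esub> inv\<^bsub>Gamma2\<^esub> (Bmat [^]\<^bsub>Gamma2\<^esub> j))
         \<otimes>\<^bsub>Gamma2\<^esub> inv\<^bsub>Gamma2\<^esub> (Amat [^]\<^bsub>Gamma2\<^esub> i) = row_prod Gamma2 Tconj i j"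
    unfolding Tconj_eq by (rule G2.conj_commutator_pow_right) simp_all
  also have "\<dots> \<in> generate Gamma2 (genU N)"
    using assms unfolding row_prod_def
    by (intro G2.lprod_in_subgroup[OF subgroup_generate_genU]) (auto intro: Tconj_in_generate_genU)
  finally show ?thesis .
qed

lemma commutator_in_generate_genU:
  assumes "i \<le> N"
  shows "Amat [^]\<^bsub>Gamma2\<^esub> i \<otimes>\<^bsub>Gamma2\<^esub> Bmat [^]\<^bsub>Gamma2\<^esub> N
           \<otimes>\<^bsub>Gamma2\<^esub> inv\<^bsub>Gamma2\<^esub> (Amat [^]\<^bsub>Gamma2\<^esub> i) \<otimes>\<^bsub>Gamma2\<^esub> inv\<^bsub>Gamma2\<^esub> (Bmat [^]\<^bsub>Gamma2\<^esub> N)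
         \<in> generate Gamma2 (genU N)"
proof -
  have "Amat [^]\<^bsub>Gamma2\<^esub> i \<otimes>\<^bsub>Gamma2\<^esub> Bmat [^]\<^bsub>Gamma2\<^esub> N
           \<otimes>\<^bsub>Gamma2\<^esub> inv\<^bsub>Gamma2\<^esub> (Amat [^]\<^bsub>Gamma2\<^esub> i) \<otimes>\<^bsub>Gamma2\<^esub> inv\<^bsub>Gamma2\<^esub> (Bmat [^]\<^bsub>Gamma2\<^esub> N)
      = rows_prod Gamma2 N Tconj i"
    unfolding Tconj_eq by (rule G2.commutator_pow_pow) simp_all
  also have "\<dots> \<in> generate Gamma2 (genU N)"
    using assms unfolding rows_prod_def
    by (intro G2.lprod_in_subgroup[OF subgroup_generate_genU]) (auto intro: Tconj_in_generate_genU)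
  finally show ?thesis .
qed

lemma schreier_generator_A_in_generate_genU:
  assumes N: "N \<ge> 1"
  shows "coset_rep N pq \<otimes>\<^bsub>Gamma2\<^esub> Amat \<otimes>\<^bsub>Gamma2\<^esub> inv\<^bsub>Gamma2\<^esub> (coset_rep N (pq + (1, 0)))
         \<in> generate Gamma2 (genU N)"
proof -
  interpret H: subgroup "generate Gamma2 (genU N)" Gamma2
    by (rule subgroup_generate_genU)
  define i where "i = nat (fst pq mod int N)"
  define j where "j = nat (snd pq mod int N)"
  define i' where "i' = nat ((fst pq + 1) mod int N)"
  have ij: "i < N" "j < N"
    using N by (auto simp: i_def j_def nat_less_iff)
  have "coset_rep N pq \<otimes>\<^bsub>Gamma2\<^esub> Amat \<otimes>\<^bsub>Gamma2\<^esub> inv\<^bsub>Gamma2\<^esub> (coset_rep N (pq + (1, 0)))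
    = inv\<^bsub>Gamma2\<^esub> (Amat [^]\<^bsub>Gamma2\<^esub> i \<otimes>\<^bsub>Gamma2\<^esub>
         (Amat \<otimes>\<^bsub>Gamma2\<^esub> Bmat [^]\<^bsub>Gamma2\<^esub> j \<otimes>\<^bsub>Gamma2\<^esub> inv\<^bsub>Gamma2\<^esub> Amat
          \<otimes>\<^bsub>Gamma2\<^esub> inv\<^bsub>Gamma2\<^esub> (Bmat [^]\<^bsub>Gamma2\<^esub> j))
       \<otimes>\<^bsub>Gamma2\<^esub> inv\<^bsub>Gamma2\<^esub> (Amat [^]\<^bsub>Gamma2\<^esub> i))
      \<otimes>\<^bsub>Gamma2\<^esub> (Amat [^]\<^bsub>Gamma2\<^esub> Suc i \<otimes>\<^bsub>Gamma2\<^esub> inv\<^bsub>Gamma2\<^esub> (Amat [^]\<^bsub>Gamma2\<^esub> i'))"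
    by (simp add: coset_rep_def i_def j_def i'_def G2.m_assoc G2.inv_mult_group G2.nat_pow_Suc)
  moreover have "i' = (if i = N - 1 then 0 else Suc i)"
    using nat_mod_add_one[OF N] by (simp add: i_def i'_def)
  then have "Amat [^]\<^bsub>Gamma2\<^esub> Suc i \<otimes>\<^bsub>Gamma2\<^esub> inv\<^bsub>Gamma2\<^esub> (Amat [^]\<^bsub>Gamma2\<^esub> i')
      \<in> generate Gamma2 (genU N)"
    using N by (cases "i = N - 1") (auto simp: genU_def intro: generate.incl generate.one)
  ultimately show ?thesis
    using conj_commutator_in_generate_genU[of i N j] ij by simp
qed

lemma schreier_generator_B_in_generate_genU:
  assumes N: "N \<ge> 1"
  shows "coset_rep N pq \<otimes>\<^bsub>Gamma2\<^esub> Bmat \<otimes>\<^bsub>Gamma2\<^esub> inv\<^bsub>Gamma2\<^esub> (coset_rep N (pq + (0, 1)))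
         \<in> generate Gamma2 (genU N)"
proof -
  interpret H: subgroup "generate Gamma2 (genU N)" Gamma2
    by (rule subgroup_generate_genU)
  define i where "i = nat (fst pq mod int N)"
  define j where "j = nat (snd pq mod int N)"
  define j' where "j' = nat ((snd pq + 1) mod int N)"
  have ij: "i < N" "j < N"
    using N by (auto simp: i_def j_def nat_less_iff)
  have j': "j' = (if j = N - 1 then 0 else Suc j)"
    using nat_mod_add_one[OF N] by (simp add: j_def j'_def)
  have "coset_rep N pq \<otimes>\<^bsub>Gamma2\<^esub> Bmat \<otimes>\<^bsub>Gamma2\<^esub> inv\<^bsub>Gamma2\<^esub> (coset_rep N (pq + (0, 1)))
    = Amat [^]\<^bsub>Gamma2\<^esub> i \<otimes>\<^bsub>Gamma2\<^esub> (Bmat [^]\<^bsub>Gamma2\<^esub> Suc j \<otimes>\<^bsub>Gamma2\<^esub> inv\<^bsub>Gamma2\<^esub> (Bmat [^]\<^bsub>Gamma2\<^esub> j'))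
      \<otimes>\<^bsub>Gamma2\<^esub> inv\<^bsub>Gamma2\<^esub> (Amat [^]\<^bsub>Gamma2\<^esub> i)"
    by (simp add: coset_rep_def i_def j_def j'_def G2.m_assoc G2.inv_mult_group G2.nat_pow_Suc)
  also have "\<dots> \<in> generate Gamma2 (genU N)"
  proof (cases "j = N - 1")
    case True
    then have "Amat [^]\<^bsub>Gamma2\<^esub> i \<otimes>\<^bsub>Gamma2\<^esub> (Bmat [^]\<^bsub>Gamma2\<^esub> Suc j \<otimes>\<^bsub>Gamma2\<^esub> inv\<^bsub>Gamma2\<^esub> (Bmat [^]\<^bsub>Gamma2\<^esub> j'))
        \<otimes>\<^bsub>Gamma2\<^esub> inv\<^bsub>Gamma2\<^esub> (Amat [^]\<^bsub>Gamma2\<^esub> i)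
      = (Amat [^]\<^bsub>Gamma2\<^esub> i \<otimes>\<^bsub>Gamma2\<^esub> Bmat [^]\<^bsub>Gamma2\<^esub> N
         \<otimes>\<^bsub>Gamma2\<^esub> inv\<^bsub>Gamma2\<^esub> (Amat [^]\<^bsub>Gamma2\<^esub> i) \<otimes>\<^bsub>Gamma2\<^esub> inv\<^bsub>Gamma2\<^esub> (Bmat [^]\<^bsub>Gamma2\<^esub> N))
        \<otimes>\<^bsub>Gamma2\<^esub> Bmat [^]\<^bsub>Gamma2\<^esub> N"
      using j' N by (simp add: G2.m_assoc)
    moreover have "Bmat [^]\<^bsub>Gamma2\<^esub> N \<in> generate Gamma2 (genU N)"
      by (auto simp: genU_def intro: generate.incl)
    ultimately show ?thesis
      using commutator_in_generate_genU[of i N] ij by simp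
  next
    case False
    then show ?thesis
      using j' by simp
  qed
  finally show ?thesis .
qed

lemma schreier_generator_in_generate_genU:
  "N \<ge> 1 \<Longrightarrow> coset_rep N pq \<otimes>\<^bsub>Gamma2\<^esub> gen_word x \<otimes>\<^bsub>Gamma2\<^esub> inv\<^bsub>Gamma2\<^esub> (coset_rep N (pq + ab_unit x))
     \<in> generate Gamma2 (genU N)"
  using schreier_generator_A_in_generate_genU schreier_generator_B_in_generate_genU by (cases x) simp_all

lemma red_eq_generate_mult_coset_rep:
  assumes N: "N \<ge> 1"
  shows "\<exists>h\<in>generate Gamma2 (genU N). red w = h \<otimes>\<^bsub>Gamma2\<^esub> coset_rep N (word_disp ab_unit w)"
proof (induct w rule: rev_induct)
  case Nil
  show ?case
    by (intro bexI[of _ "\<one>\<^bsub>Gamma2\<^esub>"] generate.one) (simp add: coset_rep_def, simp add: Gamma2_one)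
next
  case (snoc l w)
  interpret H: subgroup "generate Gamma2 (genU N)" Gamma2
    by (rule subgroup_generate_genU)
  obtain h where h: "h \<in> generate Gamma2 (genU N)"
    and w: "red w = h \<otimes>\<^bsub>Gamma2\<^esub> coset_rep N (word_disp ab_unit w)"
    using snoc by blast
  obtain x e where l: "l = (x, e)" by (cases l)
  let ?t = "coset_rep N (word_disp ab_unit w)"
  let ?t' = "coset_rep N (word_disp ab_unit (w @ [l]))"
  have step: "?t \<otimes>\<^bsub>Gamma2\<^esub> red [l] \<otimes>\<^bsub>Gamma2\<^esub> inv\<^bsub>Gamma2\<^esub> ?t' \<in> generate Gamma2 (genU N)"
  proof (cases e)
    case False
    then show ?thesis
      using schreier_generator_in_generate_genU[OF N, of "word_disp ab_unit w" x] l
      by (simp add: gen_word_eq_red)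
  next
    case True
    let ?p = "word_disp ab_unit w - ab_unit x"
    have "red [l] = inv\<^bsub>Gamma2\<^esub> (gen_word x)"
      using l True by (simp add: Gamma2_def inv_gen_word)
    then have "?t \<otimes>\<^bsub>Gamma2\<^esub> red [l] \<otimes>\<^bsub>Gamma2\<^esub> inv\<^bsub>Gamma2\<^esub> ?t'
        = inv\<^bsub>Gamma2\<^esub> (coset_rep N ?p \<otimes>\<^bsub>Gamma2\<^esub> gen_word x
            \<otimes>\<^bsub>Gamma2\<^esub> inv\<^bsub>Gamma2\<^esub> (coset_rep N (?p + ab_unit x)))"
      using l True by (simp add: G2.inv_mult_group G2.m_assoc)
    then show ?thesis
      using schreier_generator_in_generate_genU[OF N, of ?p x] by simp
  qed
  have "red (w @ [l]) = red w \<otimes>\<^bsub>Gamma2\<^esub> red [l]"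
    by (simp add: Gamma2_red_mult)
  also have "\<dots> = (h \<otimes>\<^bsub>Gamma2\<^esub> (?t \<otimes>\<^bsub>Gamma2\<^esub> red [l] \<otimes>\<^bsub>Gamma2\<^esub> inv\<^bsub>Gamma2\<^esub> ?t')) \<otimes>\<^bsub>Gamma2\<^esub> ?t'"
    using w h H.subset by (auto simp: G2.m_assoc)
  finally show ?case
    using step h by blast
qed

theorem generate_genU_eq_Phi:
  assumes N: "N \<ge> 1"
  shows "generate Gamma2 (genU N) = Phi N"
proof
  show "generate Gamma2 (genU N) \<subseteq> Phi N"
    by (rule G2.generate_subgroup_incl[OF genU_subset_Phi subgroup_Phi])
next
  show "Phi N \<subseteq> generate Gamma2 (genU N)"
  proof
    fix w
    assume "w \<in> Phi N"
    then have w: "red w = w" and "coset_rep N (word_disp ab_unit w) = \<one>\<^bsub>Gamma2\<^esub>"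
      by (auto simp: mem_Phi_iff coset_rep_def dvd_eq_mod_eq_0)
    moreover obtain h where h: "h \<in> generate Gamma2 (genU N)"
      and "red w = h \<otimes>\<^bsub>Gamma2\<^esub> coset_rep N (word_disp ab_unit w)"
      using red_eq_generate_mult_coset_rep[OF N] by blast
    moreover have "h \<in> carrier Gamma2"
      using h subgroup.subset[OF subgroup_generate_genU] by blast
    ultimately show "w \<in> generate Gamma2 (genU N)"
      by simp
  qed
qed

section \<open>The presentation of \<Phi>_N\<close>

text \<open>
  The value at position (i, j) of the letter A, resp. B, is the Schreier generator
  A^i B^j A (A^(i+1) B^j)^-1, resp. A^i B^j B (A^i B^(j+1))^-1 (exponents mod N), written as in
  schreier_generator_in_generate_genU in terms of a = A^N, b = B^N and t i j = T_(i,j).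
\<close>

definition schreier_values ::
  "('a, 'b) monoid_scheme \<Rightarrow> nat \<Rightarrow> 'a \<Rightarrow> 'a \<Rightarrow> (nat \<Rightarrow> nat \<Rightarrow> 'a) \<Rightarrow> int \<times> int \<Rightarrow> ab \<Rightarrow> 'a"
where
  "schreier_values K N a b t pq x =
     (let i = nat (fst pq mod int N); j = nat (snd pq mod int N) in
      case x of
        GA \<Rightarrow> inv\<^bsub>K\<^esub> (row_prod K t i j) \<otimes>\<^bsub>K\<^esub> (if i = N - 1 then a else \<one>\<^bsub>K\<^esub>)
      | GB \<Rightarrow> (if j = N - 1 then rows_prod K N t i \<otimes>\<^bsub>K\<^esub> b else \<one>\<^bsub>K\<^esub>))"

lemma schreier_values_periodic:
  assumes "int N dvd fst u" "int N dvd snd u"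
  shows "schreier_values K N a b t (pq + u) x = schreier_values K N a b t pq x"
proof -
  have "(fst pq + fst u) mod int N = fst pq mod int N" "(snd pq + snd u) mod int N = snd pq mod int N"
    using assms by (auto elim!: dvdE)
  then show ?thesis by (simp add: schreier_values_def)
qed

lemma schreier_values_A:
  "i < N \<Longrightarrow> j < N \<Longrightarrow>
   schreier_values K N a b t (int i, int j) GA = inv\<^bsub>K\<^esub> (row_prod K t i j) \<otimes>\<^bsub>K\<^esub> (if i = N - 1 then a else \<one>\<^bsub>K\<^esub>)"
  by (simp add: schreier_values_def)

lemma schreier_values_B:
  "i < N \<Longrightarrow> j < N \<Longrightarrow>
   schreier_values K N a b t (int i, int j) GB = (if j = N - 1 then rows_prod K N t i \<otimes>\<^bsub>K\<^esub> b else \<one>\<^bsub>K\<^esub>)"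
  by (simp add: schreier_values_def)

lemma schreier_values_A_succ:
  "N \<ge> 1 \<Longrightarrow> i < N \<Longrightarrow> j < N \<Longrightarrow>
   schreier_values K N a b t (int i, int j + 1) GA
     = inv\<^bsub>K\<^esub> (row_prod K t i (if j = N - 1 then 0 else Suc j)) \<otimes>\<^bsub>K\<^esub> (if i = N - 1 then a else \<one>\<^bsub>K\<^esub>)"
  using nat_mod_add_one[of N "int j"] by (simp add: schreier_values_def)

lemma schreier_values_B_succ:
  "N \<ge> 1 \<Longrightarrow> i < N \<Longrightarrow> j < N \<Longrightarrow>
   schreier_values K N a b t (int i + 1, int j) GB
     = (if j = N - 1 then rows_prod K N t (if i = N - 1 then 0 else Suc i) \<otimes>\<^bsub>K\<^esub> b else \<one>\<^bsub>K\<^esub>)"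
  using nat_mod_add_one[of N "int i"] by (simp add: schreier_values_def)

context group
begin

lemma schreier_values_A_trivial:
  "0 \<le> p \<Longrightarrow> p < int N - 1 \<Longrightarrow> schreier_values G N a b t (p, 0) GA = \<one>"
  by (auto simp: schreier_values_def nat_eq_iff)

lemma schreier_values_B_trivial:
  "0 \<le> q \<Longrightarrow> q < int N - 1 \<Longrightarrow> schreier_values G N a b t (p, q) GB = \<one>"
  by (auto simp: schreier_values_def nat_eq_iff)

context
  fixes N :: nat and a b :: 'a and t :: "nat \<Rightarrow> nat \<Rightarrow> 'a"
  assumes N: "N \<ge> 1"
    and a: "a \<in> carrier G" and b: "b \<in> carrier G" and t: "\<And>i j. t i j \<in> carrier G"
begin

lemma schreier_values_closed: "schreier_values G N a b t pq x \<in> carrier G"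
  using a b t by (simp add: schreier_values_def Let_def split: ab.split)

lemma row_prod_last: "row_prod G t i N = row_prod G t i (N - 1) \<otimes> t i (N - 1)"
  using row_prod_Suc[OF t, where i = i and j = "N - 1"] N by simp

lemma reidemeister_rewrite_pow_A: "reidemeister_rewrite G (schreier_values G N a b t) ab_unit 0 (replicate N (GA, False)) = a"
proof -
  have "replicate N (GA, False) = replicate (N - 1) (GA, False) @ [(GA, False)]"
    using N by (cases N) (simp_all flip: replicate_append_same)
  moreover have "reidemeister_rewrite G (schreier_values G N a b t) ab_unit 0 (replicate (N - 1) (GA, False)) = \<one>"
    using schreier_values_closed N
    by (intro reidemeister_rewrite_replicate) (auto simp: word_disp_ab_unit expsum_def sum_list_replicate intro!: schreier_values_A_trivial)
  moreover have "schreier_values G N a b t (int N - 1, 0) GA = a"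
    using schreier_values_A[of "N - 1" N 0 G a b t] N a by simp
  ultimately show ?thesis
    using schreier_values_closed N a
    by (simp add: reidemeister_rewrite_append word_disp_ab_unit expsum_def sum_list_replicate zero_prod_def)
qed

lemma reidemeister_rewrite_pow_B: "reidemeister_rewrite G (schreier_values G N a b t) ab_unit 0 (replicate N (GB, False)) = b"
proof -
  have "replicate N (GB, False) = replicate (N - 1) (GB, False) @ [(GB, False)]"
    using N by (cases N) (simp_all flip: replicate_append_same)
  moreover have "reidemeister_rewrite G (schreier_values G N a b t) ab_unit 0 (replicate (N - 1) (GB, False)) = \<one>"
    using schreier_values_closed N
    by (intro reidemeister_rewrite_replicate) (auto simp: word_disp_ab_unit expsum_def sum_list_replicate intro!: schreier_values_B_trivial)
  moreover have "schreier_values G N a b t (0, int N - 1) GB = b"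
    using schreier_values_B[of 0 N "N - 1" G a b t] N b by simp
  ultimately show ?thesis
    using schreier_values_closed N b
    by (simp add: reidemeister_rewrite_append word_disp_ab_unit expsum_def sum_list_replicate zero_prod_def)
qed

lemma reidemeister_rewrite_commutator_word:
  assumes rel: "a \<otimes> b \<otimes> inv a \<otimes> inv b = rows_prod G N t N" and ij: "i < N" "j < N"
  shows "reidemeister_rewrite G (schreier_values G N a b t) ab_unit (int i, int j) commutator_word = t i j"
proof -
  let ?s = "schreier_values G N a b t"
  have expand: "reidemeister_rewrite G ?s ab_unit (int i, int j) commutator_word
    = ?s (int i, int j) GA \<otimes> ?s (int i + 1, int j) GB \<otimes> inv (?s (int i, int j + 1) GA) \<otimes> inv (?s (int i, int j) GB)"
    using schreier_values_closed by (simp add: commutator_word_def m_assoc)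
  note at_positions = schreier_values_A[OF ij] schreier_values_B[OF ij]
    schreier_values_A_succ[OF N ij] schreier_values_B_succ[OF N ij]
  show ?thesis
  proof (cases "j = N - 1")
    case False
    then show ?thesis
      unfolding expand at_positions using ij a b t by (simp add: inv_mult_group m_assoc row_prod_Suc)
  next
    case j: True
    show ?thesis
    proof (cases "i = N - 1")
      case False
      then show ?thesis
        unfolding expand at_positions using ij j a b t by (simp add: inv_mult_group m_assoc rows_prod_Suc row_prod_last)
    next
      case i: True
      have "reidemeister_rewrite G ?s ab_unit (int i, int j) commutator_word
          = inv (row_prod G t i (N - 1)) \<otimes> (a \<otimes> b \<otimes> inv a \<otimes> inv b) \<otimes> inv (rows_prod G N t (N - 1))"
        unfolding expand at_positions using ij i j a b t by (simp add: inv_mult_group m_assoc)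
      also have "\<dots> = inv (row_prod G t i (N - 1)) \<otimes> row_prod G t i N"
        using i N t rows_prod_Suc[OF t, where i = "N - 1" and n = N] by (simp add: rel m_assoc)
      also have "\<dots> = t i j"
        using i j t by (simp add: row_prod_last m_assoc[symmetric])
      finally show ?thesis .
    qed
  qed
qed

lemma reidemeister_rewrite_Tconj_word:
  assumes rel: "a \<otimes> b \<otimes> inv a \<otimes> inv b = rows_prod G N t N" and ij: "i < N" "j < N"
  shows "reidemeister_rewrite G (schreier_values G N a b t) ab_unit 0 (Tconj_word i j) = t i j"
proof -
  let ?rw = "reidemeister_rewrite G (schreier_values G N a b t) ab_unit"
  note disp = word_disp_ab_unit expsum_def sum_list_replicate
  have "?rw 0 (replicate i (GA, False)) = \<one>"
    using schreier_values_closed ij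
    by (intro reidemeister_rewrite_replicate) (auto simp: disp intro!: schreier_values_A_trivial)
  moreover have "?rw (int i, 0) (replicate j (GB, False)) = \<one>"
    using schreier_values_closed ij
    by (intro reidemeister_rewrite_replicate) (auto simp: disp intro!: schreier_values_B_trivial)
  moreover have "?rw (int i, int j) (replicate j (GB, True)) = \<one>"
    using schreier_values_closed ij
    by (intro reidemeister_rewrite_replicate_inv) (auto simp: disp intro!: schreier_values_B_trivial)
  moreover have "?rw (int i, 0) (replicate i (GA, True)) = \<one>"
    using schreier_values_closed ij
    by (intro reidemeister_rewrite_replicate_inv) (auto simp: disp intro!: schreier_values_A_trivial)
  ultimately show ?thesis
    using schreier_values_closed reidemeister_rewrite_commutator_word[OF rel ij] t
    by (simp add: Tconj_word_def reidemeister_rewrite_append disp zero_prod_def commutator_word_def)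
qed

lemma reidemeister_rewrite_hom_Phi:
  "reidemeister_rewrite G (schreier_values G N a b t) ab_unit 0 \<in> hom (Gamma2\<lparr>carrier := Phi N\<rparr>) G"
  unfolding Gamma2_def
  by (rule reidemeister_rewrite_hom[OF schreier_values_closed])
    (auto simp: mem_Phi_iff intro: schreier_values_periodic)

lemma reidemeister_rewrite_pgen_img:
  assumes rel: "a \<otimes> b \<otimes> inv a \<otimes> inv b = rows_prod G N t N" and g: "g \<in> pgens N"
  shows "reidemeister_rewrite G (schreier_values G N a b t) ab_unit 0 (pgen_img N g) =
         (case g of Pa \<Rightarrow> a | Pb \<Rightarrow> b | PT i j \<Rightarrow> t i j)"
  using g reidemeister_rewrite_pow_A reidemeister_rewrite_pow_B reidemeister_rewrite_Tconj_word[OF rel]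
  by (cases g) (auto simp: pgen_img_def pgens_def pow_gen_word_Gamma2 Tconj_eq_red
      reidemeister_rewrite_red[OF schreier_values_closed])

end

end

lemma group_PF: "group (PF N)"
  unfolding PF_def by (rule group_free_group_on)

lemma gen_word_in_PF: "g \<in> pgens N \<Longrightarrow> gen_word g \<in> carrier (PF N)"
  unfolding PF_def by (rule gen_word_in_free_group_on)

lemma pres_map_hom: "pres_map N \<in> hom (PF N) Gamma2"
  unfolding pres_map_def PF_def
  by (rule G2.free_ext_hom) (auto simp: pgen_img_def split: pgen.split)

lemma group_hom_pres_map: "group_hom (PF N) Gamma2 (pres_map N)"
  by (simp add: group_hom_def group_hom_axioms_def group_PF group_Gamma2 pres_map_hom)

lemma pres_map_gen_word: "pres_map N (gen_word g) = pgen_img N g"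
  by (simp add: pres_map_def pgen_img_def split: pgen.split)

lemma pgen_img_pgens: "pgen_img N ` pgens N = genU N"
proof
  show "pgen_img N ` pgens N \<subseteq> genU N"
    by (auto simp: pgens_def genU_def pgen_img_def) blast
next
  show "genU N \<subseteq> pgen_img N ` pgens N"
  proof
    fix x
    assume "x \<in> genU N"
    then consider "x = pgen_img N Pa" | "x = pgen_img N Pb" | i j where "i < N" "j < N" "x = pgen_img N (PT i j)"
      by (auto simp: genU_def pgen_img_def)
    then show "x \<in> pgen_img N ` pgens N"
      by cases (auto simp: pgens_def)
  qed
qed

theorem image_pres_map:
  assumes "N \<ge> 1"
  shows "pres_map N ` carrier (PF N) = Phi N"
proof -
  have "pres_map N ` carrier (PF N) = generate Gamma2 (pgen_img N ` pgens N)"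
    unfolding pres_map_def PF_def
    by (rule G2.free_ext_image) (auto simp: pgen_img_def split: pgen.split)
  then show ?thesis
    using pgen_img_pgens generate_genU_eq_Phi[OF assms] by simp
qed

lemma hom_relator:
  assumes K: "group K" and f: "f \<in> hom (PF N) K"
  shows "f (relator N) =
    f (gen_word Pa) \<otimes>\<^bsub>K\<^esub> f (gen_word Pb) \<otimes>\<^bsub>K\<^esub> inv\<^bsub>K\<^esub> f (gen_word Pa) \<otimes>\<^bsub>K\<^esub> inv\<^bsub>K\<^esub> f (gen_word Pb)
    \<otimes>\<^bsub>K\<^esub> inv\<^bsub>K\<^esub> rows_prod K N (\<lambda>i j. f (gen_word (PT i j))) N"
proof -
  interpret f: group_hom "PF N" K f
    using K f by (simp add: group_hom_def group_hom_axioms_def group_PF)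
  have ab: "gen_word Pa \<in> carrier (PF N)" "gen_word Pb \<in> carrier (PF N)"
    by (auto intro: gen_word_in_PF simp: pgens_def)
  have T: "\<And>i j. i < N \<Longrightarrow> j < N \<Longrightarrow> gen_word (PT i j) \<in> carrier (PF N)"
    by (auto intro: gen_word_in_PF simp: pgens_def)
  have "concat (map (\<lambda>i. map (\<lambda>j. gen_word (PT (N - 1 - i) j)) [0..<N]) [0..<N]) =
      concat (map (\<lambda>m. map (\<lambda>j. gen_word (PT m j)) [0..<N]) (map (\<lambda>i. N - 1 - i) [0..<N]))"
    by (simp add: o_def)
  also have "map (\<lambda>i. N - 1 - i) [0..<N] = rev [0..<N]"
    by (rule nth_equalityI) (auto simp: rev_nth)
  finally have "relator N = gen_word Pa \<otimes>\<^bsub>PF N\<^esub> gen_word Pb \<otimes>\<^bsub>PF N\<^esub> inv\<^bsub>PF N\<^esub> gen_word Pa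
      \<otimes>\<^bsub>PF N\<^esub> inv\<^bsub>PF N\<^esub> gen_word Pb \<otimes>\<^bsub>PF N\<^esub> inv\<^bsub>PF N\<^esub> rows_prod (PF N) N (\<lambda>i j. gen_word (PT i j)) N"
    by (simp add: relator_def Let_def rows_prod_def)
  moreover have "rows_prod (PF N) N (\<lambda>i j. gen_word (PT i j)) N \<in> carrier (PF N)"
    unfolding rows_prod_def using T by (intro f.G.lprod_closed) auto
  ultimately show ?thesis
    using ab T by (simp add: f.rows_prod_hom)
qed

lemma pres_map_relator: "pres_map N (relator N) = \<one>\<^bsub>Gamma2\<^esub>"
proof -
  have "rows_prod Gamma2 N (\<lambda>i j. pres_map N (gen_word (PT i j))) N = rows_prod Gamma2 N Tconj N"
    by (simp add: pres_map_gen_word pgen_img_def)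
  also have "\<dots> = Amat [^]\<^bsub>Gamma2\<^esub> N \<otimes>\<^bsub>Gamma2\<^esub> Bmat [^]\<^bsub>Gamma2\<^esub> N
      \<otimes>\<^bsub>Gamma2\<^esub> inv\<^bsub>Gamma2\<^esub> (Amat [^]\<^bsub>Gamma2\<^esub> N) \<otimes>\<^bsub>Gamma2\<^esub> inv\<^bsub>Gamma2\<^esub> (Bmat [^]\<^bsub>Gamma2\<^esub> N)"
    unfolding Tconj_eq by (rule G2.commutator_pow_pow[symmetric]) simp_all
  finally show ?thesis
    by (simp add: hom_relator[OF group_Gamma2 pres_map_hom] pres_map_gen_word pgen_img_def)
qed

lemma relator_in_PF: "relator N \<in> carrier (PF N)"
proof -
  interpret F: group "PF N" by (rule group_PF)
  have "gen_word Pa \<in> carrier (PF N)" "gen_word Pb \<in> carrier (PF N)"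
    "\<And>i j. i < N \<Longrightarrow> j < N \<Longrightarrow> gen_word (PT i j) \<in> carrier (PF N)"
    by (auto intro: gen_word_in_PF simp: pgens_def)
  then show ?thesis
    unfolding relator_def Let_def by (intro F.m_closed F.inv_closed F.lprod_closed) auto
qed

lemma relation_if_hom_relator_eq_one:
  assumes K: "group K" and f: "f \<in> hom (PF N) K" and "f (relator N) = \<one>\<^bsub>K\<^esub>"
  shows "f (gen_word Pa) \<otimes>\<^bsub>K\<^esub> f (gen_word Pb) \<otimes>\<^bsub>K\<^esub> inv\<^bsub>K\<^esub> f (gen_word Pa) \<otimes>\<^bsub>K\<^esub> inv\<^bsub>K\<^esub> f (gen_word Pb)
    = rows_prod K N (\<lambda>i j. f (gen_word (PT i j))) N" (is "?X = ?Y")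
proof -
  interpret K: group K by (rule K)
  have "f (gen_word g) \<in> carrier K" if "g \<in> pgens N" for g
    using f gen_word_in_PF[OF that] by (auto simp: hom_def)
  then have X: "?X \<in> carrier K" and Y: "?Y \<in> carrier K"
    unfolding rows_prod_def by (auto simp: pgens_def intro!: K.lprod_closed)
  have "?X \<otimes>\<^bsub>K\<^esub> inv\<^bsub>K\<^esub> ?Y = \<one>\<^bsub>K\<^esub>"
    using hom_relator[OF K f] assms(3) by simp
  then have "inv\<^bsub>K\<^esub> (inv\<^bsub>K\<^esub> ?Y) = ?X"
    using X Y by (intro K.inv_equality) simp_all
  then show ?thesis
    using Y by simp
qed

lemma kernel_pres_map_subset:
  assumes N: "N \<ge> 1"
  shows "kernel (PF N) Gamma2 (pres_map N) \<subseteq> normal_closure (PF N) {relator N}"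
proof -
  let ?R = "normal_closure (PF N) {relator N}"
  let ?Q = "PF N Mod ?R"
  interpret F: group "PF N" by (rule group_PF)
  interpret R: normal ?R "PF N"
    using F.normal_closure_normal relator_in_PF by simp
  interpret Q: group ?Q
    by (rule R.factorgroup_is_group)
  define proj where "proj x = ?R #>\<^bsub>PF N\<^esub> x" for x
  have proj: "proj \<in> hom (PF N) ?Q"
    unfolding proj_def by (rule R.r_coset_hom_Mod)
  define a where "a = proj (gen_word Pa)"
  define b where "b = proj (gen_word Pb)"
  define T where "T i j = (if i < N \<and> j < N then proj (gen_word (PT i j)) else \<one>\<^bsub>?Q\<^esub>)" for i j
  have ab: "a \<in> carrier ?Q" "b \<in> carrier ?Q" and T: "\<And>i j. T i j \<in> carrier ?Q"
    using proj gen_word_in_PF Q.one_closed by (auto simp: a_def b_def T_def pgens_def hom_def)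
  have "relator N \<in> ?R"
    using relator_in_PF by (intro F.mem_normal_closure) auto
  then have "proj (relator N) = \<one>\<^bsub>?Q\<^esub>"
    using R.rcos_const[OF F.group_axioms] by (simp add: proj_def)
  then have rel: "a \<otimes>\<^bsub>?Q\<^esub> b \<otimes>\<^bsub>?Q\<^esub> inv\<^bsub>?Q\<^esub> a \<otimes>\<^bsub>?Q\<^esub> inv\<^bsub>?Q\<^esub> b = rows_prod ?Q N T N"
    using relation_if_hom_relator_eq_one[OF Q.group_axioms proj] rows_prod_cong[of N N T _ ?Q]
    by (simp add: a_def b_def T_def)
  define rw where "rw = reidemeister_rewrite ?Q (schreier_values ?Q N a b T) ab_unit 0"
  have "pres_map N \<in> hom (PF N) (Gamma2\<lparr>carrier := Phi N\<rparr>)"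
    using pres_map_hom image_pres_map[OF N] by (auto simp: hom_def)
  then have hom: "rw \<circ> pres_map N \<in> hom (PF N) ?Q"
    unfolding rw_def using Q.reidemeister_rewrite_hom_Phi[OF N ab T] by (rule hom_compose)
  have gens: "(rw \<circ> pres_map N) (gen_word g) = proj (gen_word g)" if "g \<in> pgens N" for g
    using that Q.reidemeister_rewrite_pgen_img[OF N ab T rel]
    by (auto simp: rw_def pres_map_gen_word a_def b_def T_def pgens_def)
  have "rw (pres_map N x) = proj x" if "x \<in> carrier (PF N)" for x
    using free_group_on_hom_eqI[where S = "pgens N", folded PF_def, OF Q.group_axioms hom proj gens that]
    by simp
  then show ?thesis
    unfolding proj_def by (rule R.kernel_subset_of_factorization[OF group_hom_pres_map])
qed

theorem kernel_pres_map:
  assumes "N \<ge> 1"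
  shows "kernel (PF N) Gamma2 (pres_map N) = normal_closure (PF N) {relator N}"
proof
  interpret h: group_hom "PF N" Gamma2 "pres_map N"
    by (rule group_hom_pres_map)
  show "normal_closure (PF N) {relator N} \<subseteq> kernel (PF N) Gamma2 (pres_map N)"
    using relator_in_PF pres_map_relator by (intro h.normal_closure_subset_kernel) (simp add: kernel_def)
qed (rule kernel_pres_map_subset[OF assms])

theorem proposition6:
  fixes N :: nat
  assumes "N \<ge> 1"
  shows "generate Gamma2 (genU N) = Phi N
       \<and> pres_map N ` carrier (PF N) = Phi N
       \<and> kernel (PF N) Gamma2 (pres_map N) = normal_closure (PF N) {relator N}"
  using generate_genU_eq_Phi[OF assms] image_pres_map[OF assms] kernel_pres_map[OF assms]
  by blast

end
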